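(* Let $F$ be a field, $n\ge 1$, and let $T\subseteq GL_n(F)$ be a split (not necessarily maximal) torus acting on $M_n(F)$ by conjugation $a\mapsto \tau a\tau^{-1}$. Let $X(T)$ be its character group (written additively, identity $0$), $W(T,M_n)\subseteq X(T)$ the set of weights of this action, $M_\omega$ the weight space of $\omega\in W(T,M_n)$ (so $M_n(F)=\bigoplus_{\omega\in W(T,M_n)}M_\omega$ and $M_0=\{a\in M_n(F):\tau a\tau^{-1}=a\ \forall \tau\in T\}$ is the centralizer of $T$), and $\pi_\omega:M_n(F)\to M_\omega$ the corresponding projections. Let $f:X(T)\otimes_{\mathbb Z}\mathbb Q\to\mathbb Q$ be a $\mathbb Q$-linear functional with $f(\omega)\ne 0$ for all $0\ne\omega\in W(T,M_n)$, and put $W_f^+=\{\omega\in W(T,M_n): f(\omega)>0\}$. Let $\Lambda\in T$ be such that $\mathrm{Tr}(\Lambda e)\neq 0$ for every nonzero idempotent $e\in M_0$. Let $V$ be an $F$-subspace of $M_n(F)$ such that both $V$ and $\pi_0(V)$ are contained in $\Lambda^\perp=\{b\in M_n(F):\mathrm{Tr}(\Lambda b)=0\}$, and such that $\pi_\omega(V)\,\pi_{-\omega'}(V)=0$ for all $\omega,\omega'\in W_f^+$ (i.e. $xy=0$ for all $x\in\pi_\omega(V)$, $y\in \pi_{-\omega'}(V)$). Then $V$ is a Mathieu subspace of $M_n(F)$.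
   Context: Let $\mathcal A$ be an associative algebra over a field $F$. An $F$-subspace $M\subseteq\mathcal A$ is a Mathieu subspace (MS) of $\mathcal A$ if for all $a,b,c\in\mathcal A$ such that $a^m\in M$ for all $m\ge 1$, there exists $N$ (depending on $a,b,c$) such that $ba^mc\in M$ for all $m\ge N$. An idempotent is an element $e$ with $e^2=e$. For a subset $S\subseteq M_n(F)$, $S^\perp=\{b\in M_n(F):\mathrm{Tr}(bx)=0 \text{ for all } x\in S\}$. The weights of the conjugation action of a split torus on $M_n(F)$ form a set closed under $\omega\mapsto-\omega$. *)

theory Defs
  imports "Jordan_Normal_Form.Matrix"
begin

definition mat_trace :: "'a::comm_ring_1 mat \<Rightarrow> 'a" where
  "mat_trace A = (\<Sum>i<dim_row A. A $$ (i, i))"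

definition is_subspace :: "nat \<Rightarrow> 'a::field mat set \<Rightarrow> bool" where
  "is_subspace n V \<longleftrightarrow> V \<subseteq> carrier_mat n n \<and> 0\<^sub>m n n \<in> V \<and>
     (\<forall>x\<in>V. \<forall>y\<in>V. x + y \<in> V) \<and> (\<forall>c. \<forall>x\<in>V. c \<cdot>\<^sub>m x \<in> V)"

definition mathieu_subspace :: "nat \<Rightarrow> 'a::field mat set \<Rightarrow> bool" where
  "mathieu_subspace n M \<longleftrightarrow> is_subspace n M \<and>
     (\<forall>a\<in>carrier_mat n n. \<forall>b\<in>carrier_mat n n. \<forall>c\<in>carrier_mat n n.
        (\<forall>m\<ge>1. a ^\<^sub>m m \<in> M) \<longrightarrow> (\<exists>N. \<forall>m\<ge>N. b * a ^\<^sub>m m * c \<in> M))"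

definition idempotent_mat :: "'a::field mat \<Rightarrow> bool" where
  "idempotent_mat e \<longleftrightarrow> e * e = e"

text \<open>Split torus in GL_n(F): the image of a homomorphism of algebraic groups
  G_m^r \<rightarrow> GL_n, which (after conjugation by an invertible P with inverse Pinv)
  is t \<mapsto> diag(\<chi>_{a_0}(t),...,\<chi>_{a_{n-1}}(t)), with a_i \<in> Z^r
  (a_i :: int vec of dimension r) and \<chi>_w(t) = \<Prod>_k t_k^{w_k}.
  The character group is (a sublattice of) Z^r, identity 0.\<close>
definition char_val :: "int vec \<Rightarrow> (nat \<Rightarrow> 'a::field) \<Rightarrow> 'a" where
  "char_val w t = (\<Prod>k<dim_vec w. t k powi (w $ k))"

definition torus_elem :: "nat \<Rightarrow> 'a::field mat \<Rightarrow> 'a mat \<Rightarrow> (nat \<Rightarrow> int vec)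
    \<Rightarrow> (nat \<Rightarrow> 'a) \<Rightarrow> 'a mat" where
  "torus_elem n P Pinv a t =
     P * mat n n (\<lambda>(i, j). if i = j then char_val (a i) t else 0) * Pinv"

definition torus :: "nat \<Rightarrow> nat \<Rightarrow> 'a::field mat \<Rightarrow> 'a mat \<Rightarrow> (nat \<Rightarrow> int vec) \<Rightarrow> 'a mat set" where
  "torus n r P Pinv a = {torus_elem n P Pinv a t | t. \<forall>k<r. t k \<noteq> 0}"

text \<open>Weights of the conjugation action of the torus on M_n(F):
  the basis element P E_ij Pinv has weight a_i - a_j.\<close>
definition weights :: "nat \<Rightarrow> (nat \<Rightarrow> int vec) \<Rightarrow> int vec set" where
  "weights n a = {a i - a j | i j. i < n \<and> j < n}"

definition wproj :: "nat \<Rightarrow> 'a::field mat \<Rightarrow> 'a mat \<Rightarrow> (nat \<Rightarrow> int vec) \<Rightarrow> int vec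
    \<Rightarrow> 'a mat \<Rightarrow> 'a mat" where
  "wproj n P Pinv a w x =
     P * mat n n (\<lambda>(i, j). if a i - a j = w then (Pinv * x * P) $$ (i, j) else 0) * Pinv"

definition wspace :: "nat \<Rightarrow> 'a::field mat \<Rightarrow> 'a mat \<Rightarrow> (nat \<Rightarrow> int vec) \<Rightarrow> int vec
    \<Rightarrow> 'a mat set" where
  "wspace n P Pinv a w = wproj n P Pinv a w ` carrier_mat n n"

definition perp_trace :: "nat \<Rightarrow> 'a::field mat \<Rightarrow> 'a mat set" where
  "perp_trace n L = {b \<in> carrier_mat n n. mat_trace (L * b) = 0}"

end

theory Submission
  imports Defs "Jordan_Normal_Form.Determinant"
begin

text \<open>A subspace of \<open>M\<^sub>n(F)\<close> without nonzero idempotents is a Mathieu subspace: if all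
  positive powers of \<open>A\<close> lie in it, the Fitting idempotent of \<open>A\<close> is a polynomial in \<open>A\<close> without
  constant term, hence lies in it and vanishes, so \<open>A\<close> is nilpotent. It therefore suffices to
  show that an idempotent \<open>e \<in> V\<close> is zero. After conjugating the torus to diagonal form, grade
  the coordinates by \<open>f(a\<^sub>i)\<close>; the product hypothesis says that the block products
  \<open>e\<^bsub>c'c\<^esub> e\<^bsub>cc''\<^esub>\<close> vanish for \<open>c\<close> below \<open>c'\<close> and \<open>c''\<close>. The block-diagonal part \<open>X\<close>
  of \<open>e\<close> then satisfies \<open>X\<^sup>2 = X + q\<close> with \<open>q\<^sup>2 = 0\<close>, so \<open>3X\<^sup>2 - 2X\<^sup>3\<close> is an idempotent
  of the centralizer \<open>M\<^sub>0\<close> whose \<open>\<Lambda>\<close>-trace is that of \<open>e\<close>, namely \<open>0\<close>; by the hypothesis on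
  \<open>\<Lambda>\<close> it vanishes. Hence \<open>X\<^sup>2 = 0\<close>, and a downward induction over the grades gives
  \<open>e = 0\<close>.\<close>

lemma index_mult_mat_sum:
  assumes "A \<in> carrier_mat n n" "B \<in> carrier_mat n n" "i < n" "j < n"
  shows "(A * B) $$ (i, j) = (\<Sum>m<n. A $$ (i, m) * B $$ (m, j))"
  using assms by (simp add: scalar_prod_def atLeast0LessThan row_def col_def)

lemma mat_trace_mult_comm:
  assumes A: "A \<in> carrier_mat n n" and B: "B \<in> carrier_mat n n"
  shows "mat_trace (A * B) = mat_trace (B * A)"
proof -
  have "mat_trace (A * B) = (\<Sum>i<n. (A * B) $$ (i, i))"
    using A B by (simp add: mat_trace_def)
  also have "\<dots> = (\<Sum>i<n. \<Sum>m<n. A $$ (i, m) * B $$ (m, i))"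
    using A B by (simp add: mat_trace_def index_mult_mat_sum del: index_mult_mat)
  also have "\<dots> = (\<Sum>m<n. \<Sum>i<n. B $$ (m, i) * A $$ (i, m))"
    by (subst sum.swap) (simp add: mult.commute)
  also have "\<dots> = (\<Sum>i<n. (B * A) $$ (i, i))"
    using A B by (simp add: index_mult_mat_sum del: index_mult_mat)
  also have "\<dots> = mat_trace (B * A)"
    using A B by (simp add: mat_trace_def)
  finally show ?thesis .
qed

lemma conjugate_mult:
  fixes P :: "'a::semiring_1 mat"
  assumes P: "P \<in> carrier_mat n n" and Pinv: "Pinv \<in> carrier_mat n n" and inv: "Pinv * P = 1\<^sub>m n"
    and X: "X \<in> carrier_mat n n" and Y: "Y \<in> carrier_mat n n"
  shows "(P * X * Pinv) * (P * Y * Pinv) = P * (X * Y) * Pinv"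
proof -
  have YP: "Y * Pinv \<in> carrier_mat n n"
    using Y Pinv by simp
  have "Pinv * (P * (Y * Pinv)) = (Pinv * P) * (Y * Pinv)"
    using P Pinv YP by (simp add: assoc_mult_mat[of _ n n _ n _ n])
  also have "\<dots> = Y * Pinv"
    using YP by (simp add: inv left_mult_one_mat[OF YP])
  finally have cancel: "Pinv * (P * (Y * Pinv)) = Y * Pinv" .
  show ?thesis
    using P Pinv X Y by (simp add: assoc_mult_mat[of _ n n _ n _ n] cancel)
qed

lemma conjugate_cancel:
  fixes P :: "'a::semiring_1 mat"
  assumes P: "P \<in> carrier_mat n n" and Pinv: "Pinv \<in> carrier_mat n n" and inv: "Pinv * P = 1\<^sub>m n"
    and X: "X \<in> carrier_mat n n"
  shows "Pinv * (P * X * Pinv) * P = X"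
proof -
  have "Pinv * (P * X * Pinv) * P = (Pinv * P) * X * (Pinv * P)"
    using P Pinv X by (simp add: assoc_mult_mat[of _ n n _ n _ n])
  then show ?thesis
    using X by (simp add: inv left_mult_one_mat[OF X] right_mult_one_mat[OF X])
qed

section \<open>Polynomials evaluated at square matrices\<close>

definition mat_poly :: "nat \<Rightarrow> 'a::comm_ring_1 poly \<Rightarrow> 'a mat \<Rightarrow> 'a mat" where
  "mat_poly n p A = foldr (\<lambda>c M. c \<cdot>\<^sub>m 1\<^sub>m n + A * M) (coeffs p) (0\<^sub>m n n)"

lemma mat_poly_0 [simp]: "mat_poly n 0 A = 0\<^sub>m n n"
  by (simp add: mat_poly_def)

lemma mat_poly_pCons:
  assumes A: "A \<in> carrier_mat n n"
  shows "mat_poly n (pCons c p) A = c \<cdot>\<^sub>m 1\<^sub>m n + A * mat_poly n p A"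
proof (cases "p = 0 \<and> c = 0")
  case True
  then show ?thesis
    using A by (simp add: mat_poly_def) (intro eq_matI, auto)
next
  case False
  then show ?thesis
    by (auto simp: mat_poly_def cCons_def)
qed

lemma mat_poly_carrier [simp]:
  "A \<in> carrier_mat n n \<Longrightarrow> mat_poly n p A \<in> carrier_mat n n"
  by (induction p) (simp_all add: mat_poly_pCons)

lemma mat_poly_add:
  assumes A: "A \<in> carrier_mat n n"
  shows "mat_poly n (p + q) A = mat_poly n p A + mat_poly n q A"
proof (induction p q rule: poly_induct2)
  case 0
  then show ?case by (intro eq_matI) auto
next
  case (pCons a p b q)
  have P: "mat_poly n p A \<in> carrier_mat n n" and Q: "mat_poly n q A \<in> carrier_mat n n"
    using A by auto
  have "mat_poly n (pCons a p + pCons b q) A = (a + b) \<cdot>\<^sub>m 1\<^sub>m n + (A * mat_poly n p A + A * mat_poly n q A)"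
    using pCons A P Q by (simp add: mat_poly_pCons mult_add_distrib_mat[OF A P Q])
  also have "\<dots> = (a \<cdot>\<^sub>m 1\<^sub>m n + A * mat_poly n p A) + (b \<cdot>\<^sub>m 1\<^sub>m n + A * mat_poly n q A)"
    using A P Q by (intro eq_matI) (auto simp: algebra_simps carrier_matD[OF P] carrier_matD[OF Q])
  finally show ?case
    using A by (simp add: mat_poly_pCons)
qed

lemma mat_poly_smult:
  assumes A: "A \<in> carrier_mat n n"
  shows "mat_poly n (smult a p) A = a \<cdot>\<^sub>m mat_poly n p A"
proof (induction p)
  case (pCons c p)
  have P: "mat_poly n p A \<in> carrier_mat n n"
    using A by auto
  have "mat_poly n (smult a (pCons c p)) A = (a * c) \<cdot>\<^sub>m 1\<^sub>m n + A * (a \<cdot>\<^sub>m mat_poly n p A)"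
    using pCons A by (simp add: mat_poly_pCons)
  also have "\<dots> = a \<cdot>\<^sub>m (c \<cdot>\<^sub>m 1\<^sub>m n + A * mat_poly n p A)"
    using A P by (simp add: mult_smult_distrib[OF A P])
      (intro eq_matI, auto simp: algebra_simps carrier_matD[OF P])
  finally show ?case
    using A by (simp add: mat_poly_pCons)
qed simp

lemma mat_poly_mult:
  assumes A: "A \<in> carrier_mat n n"
  shows "mat_poly n (p * q) A = mat_poly n p A * mat_poly n q A"
proof (induction p)
  case 0
  then show ?case
    using A by (simp add: left_mult_zero_mat[OF mat_poly_carrier[OF A]])
next
  case (pCons a p)
  have P: "mat_poly n p A \<in> carrier_mat n n" and Q: "mat_poly n q A \<in> carrier_mat n n"
    using A by auto
  have "mat_poly n (pCons a p * q) A
      = a \<cdot>\<^sub>m mat_poly n q A + (0 \<cdot>\<^sub>m 1\<^sub>m n + A * (mat_poly n p A * mat_poly n q A))"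
    using pCons A by (simp add: mat_poly_add mat_poly_smult mat_poly_pCons)
  also have "\<dots> = a \<cdot>\<^sub>m mat_poly n q A + A * (mat_poly n p A * mat_poly n q A)"
    using A P Q by (intro eq_matI) (auto simp: carrier_matD[OF P] carrier_matD[OF Q])
  also have "\<dots> = (a \<cdot>\<^sub>m 1\<^sub>m n + A * mat_poly n p A) * mat_poly n q A"
    using A P Q by (simp add: add_mult_distrib_mat[of _ n n _ _ n] mult_smult_assoc_mat[of _ n n _ n]
        left_mult_one_mat[OF Q] assoc_mult_mat[OF A P Q])
  finally show ?case
    using A by (simp add: mat_poly_pCons)
qed

lemma mat_poly_1 [simp]:
  assumes A: "A \<in> carrier_mat n n"
  shows "mat_poly n 1 A = 1\<^sub>m n"
proof -
  have "mat_poly n [:1:] A = 1\<^sub>m n"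
    using A by (simp add: mat_poly_pCons[OF A]) (intro eq_matI, auto)
  then show ?thesis
    by (simp add: one_pCons)
qed

lemma mat_poly_X [simp]:
  assumes A: "A \<in> carrier_mat n n"
  shows "mat_poly n [:0, 1:] A = A"
proof -
  have "mat_poly n [:0, 1:] A = A * mat_poly n [:1:] A"
    using A by (simp add: mat_poly_pCons[OF A]) (intro eq_matI, auto)
  then show ?thesis
    using A by (simp add: one_pCons[symmetric])
qed

lemma mat_poly_X_power:
  assumes A: "A \<in> carrier_mat n n"
  shows "mat_poly n ([:0, 1:] ^ k) A = A ^\<^sub>m k"
proof (induction k)
  case (Suc k)
  have "mat_poly n ([:0, 1:] ^ Suc k) A = mat_poly n ([:0, 1:] ^ k * [:0, 1:]) A"
    by (simp only: power_Suc2)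
  then show ?case
    using Suc by (simp only: mat_poly_mult[OF A] mat_poly_X[OF A]) simp
qed (use A in simp)

lemma mat_poly_diff:
  assumes A: "A \<in> carrier_mat n n"
  shows "mat_poly n (p - q) A = mat_poly n p A - mat_poly n q A"
proof -
  have "p - q = p + smult (-1) q" by simp
  then have "mat_poly n (p - q) A = mat_poly n p A + (-1) \<cdot>\<^sub>m mat_poly n q A"
    by (simp only: mat_poly_add[OF A] mat_poly_smult[OF A])
  also have "\<dots> = mat_poly n p A - mat_poly n q A"
    using A by (intro eq_matI) auto
  finally show ?thesis .
qed
lemma mat_poly_monom:
  assumes A: "A \<in> carrier_mat n n"
  shows "mat_poly n (monom c k) A = c \<cdot>\<^sub>m A ^\<^sub>m k"
  by (simp add: monom_altdef mat_poly_smult[OF A] mat_poly_X_power[OF A])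

lemma index_mat_poly_sum_monom:
  assumes A: "A \<in> carrier_mat n n" and ij: "i < n" "j < n"
  shows "mat_poly n (\<Sum>k<N. monom (c k) (Suc k)) A $$ (i, j) = (\<Sum>k<N. c k * (A ^\<^sub>m Suc k) $$ (i, j))"
proof (induction N)
  case (Suc N)
  then show ?case
    using A ij by (simp add: mat_poly_add[OF A] mat_poly_monom[OF A])
qed (use ij in simp)

lemma annihilating_poly_exists:
  fixes A :: "'a::field mat"
  assumes A: "A \<in> carrier_mat n n"
  shows "\<exists>p. p \<noteq> 0 \<and> poly p 0 = 0 \<and> mat_poly n p A = 0\<^sub>m n n"
proof -
  define N where "N = n * n + 1"
  \<comment> \<open>Row \<open>i * n + j\<close> of \<open>M\<close> lists the \<open>(i, j)\<close> entries of \<open>A\<^sup>1, \<dots>, A\<^sup>N\<close>; the last row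
    is zero, so \<open>M\<close> is singular and a kernel vector yields the coefficients of \<open>p\<close>.\<close>
  define row_of where "row_of = (\<lambda>r. vec N (\<lambda>k. (A ^\<^sub>m Suc k) $$ (r div n, r mod n)) :: 'a vec)"
  define M where "M = mat\<^sub>r N N (\<lambda>r. if r = N - 1 then 0\<^sub>v N else row_of r)"
  have M: "M \<in> carrier_mat N N"
    by (simp add: M_def)
  have "det M = 0"
    unfolding M_def by (rule det_row_0) (auto simp: N_def row_of_def)
  then obtain v where v: "v \<in> carrier_vec N" "v \<noteq> 0\<^sub>v N" "M *\<^sub>v v = 0\<^sub>v N"
    using det_0_iff_vec_prod_zero_field[OF M] by auto
  define p where "p = (\<Sum>k<N. monom (v $ k) (Suc k))"
  have coeff_p: "coeff p (Suc k) = (if k < N then v $ k else 0)" for k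
    by (simp add: p_def coeff_sum)
  have "p \<noteq> 0"
  proof
    assume "p = 0"
    have "v $ k = 0" if "k < N" for k
      using coeff_p[of k] \<open>p = 0\<close> that by simp
    then have "v = 0\<^sub>v N"
      using v(1) by (intro eq_vecI) auto
    with v(2) show False ..
  qed
  moreover have "poly p 0 = 0"
    by (simp add: p_def poly_0_coeff_0 coeff_sum)
  moreover have "mat_poly n p A = 0\<^sub>m n n"
  proof (rule eq_matI)
    fix i j assume "i < dim_row (0\<^sub>m n n :: 'a mat)" "j < dim_col (0\<^sub>m n n :: 'a mat)"
    then have ij: "i < n" "j < n" by auto
    define r where "r = i * n + j"
    have r_div_mod: "r div n = i" "r mod n = j"
      using ij by (auto simp: r_def)
    have "r < n * n"
      using ij mult_le_mono1[of "Suc i" n n] by (simp add: r_def)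
    then have r: "r < N" "r \<noteq> N - 1"
      by (auto simp: N_def)
    have "mat_poly n p A $$ (i, j) = (\<Sum>k<N. v $ k * (A ^\<^sub>m Suc k) $$ (i, j))"
      unfolding p_def by (rule index_mat_poly_sum_monom[OF A ij])
    also have "\<dots> = row M r \<bullet> v"
      using v(1) r by (auto simp: M_def row_of_def r_div_mod scalar_prod_def atLeast0LessThan
          mult.commute intro!: sum.cong)
    also have "\<dots> = (M *\<^sub>v v) $ r"
      using M r by simp
    finally show "mat_poly n p A $$ (i, j) = 0\<^sub>m n n $$ (i, j)"
      using v(3) r ij by simp
  qed (use mat_poly_carrier[OF A, of p] in auto)
  ultimately show ?thesis by blast
qed

lemma idempotent_lifting_identities:
  fixes x q e :: "'a::comm_ring_1"
  assumes "q = x * x - x" and "e = x + q - 2 * (q * x)"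
  shows "e * e = e + q * q * (4 * (x * x) - 4 * x - 3)"
    and "x * x = x * x * e + q * q * (2 * x + 1)"
  unfolding assms by (simp_all add: algebra_simps)

text \<open>Lifting an idempotent modulo a square-zero ideal: \<open>E = 3A\<^sup>2 - 2A\<^sup>3\<close>.\<close>
lemma idempotent_lifting:
  fixes A q :: "'a::comm_ring_1 mat"
  assumes A: "A \<in> carrier_mat n n" and q: "q \<in> carrier_mat n n"
    and square: "A * A = A + q" and square_zero: "q * q = 0\<^sub>m n n"
  defines "E \<equiv> A + q - 2 \<cdot>\<^sub>m (q * A)"
  shows "E * E = E" and "E = 0\<^sub>m n n \<Longrightarrow> A * A = 0\<^sub>m n n"
proof -
  define x :: "'a poly" where "x = [:0, 1:]"
  define qp where "qp = x * x - x"
  define ep where "ep = x + qp - 2 * (qp * x)"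
  have X: "mat_poly n x A = A"
    using A by (simp add: x_def)
  have AA: "A * A \<in> carrier_mat n n"
    using A by simp
  have "mat_poly n qp A = A * A - A"
    unfolding qp_def by (simp only: mat_poly_diff[OF A] mat_poly_mult[OF A] X)
  also have "\<dots> = q"
    using A q by (simp add: square) (intro eq_matI, auto)
  finally have Q: "mat_poly n qp A = q" .
  have E_eq: "mat_poly n ep A = E"
    unfolding ep_def E_def numeral_mult_conv_smult
    by (simp only: mat_poly_add[OF A] mat_poly_diff[OF A] mat_poly_smult[OF A] mat_poly_mult[OF A] X Q)
  have kills: "mat_poly n (qp * qp * r) A = 0\<^sub>m n n" for r
    using A by (simp add: mat_poly_mult Q square_zero left_mult_zero_mat[OF mat_poly_carrier[OF A]])
  have "mat_poly n (ep * ep) A = mat_poly n ep A + mat_poly n (qp * qp * (4 * (x * x) - 4 * x - 3)) A"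
    unfolding idempotent_lifting_identities(1)[OF qp_def ep_def] by (rule mat_poly_add[OF A])
  then have "mat_poly n (ep * ep) A = E"
    using A E_eq kills mat_poly_carrier[OF A, of ep] by simp
  then show "E * E = E"
    using E_eq by (simp only: mat_poly_mult[OF A])
  assume "E = 0\<^sub>m n n"
  have "A * A = A * A * E + 0\<^sub>m n n"
    using idempotent_lifting_identities(2)[OF qp_def ep_def] E_eq kills
    by (metis X mat_poly_add[OF A] mat_poly_mult[OF A])
  then show "A * A = 0\<^sub>m n n"
    using AA by (simp add: \<open>E = 0\<^sub>m n n\<close> right_mult_zero_mat[OF AA])
qed

section \<open>Subspaces without nonzero idempotents\<close>

lemma subspace_pow_mult_mat_poly:
  assumes A: "A \<in> carrier_mat n n" and V: "is_subspace n V" and powers: "\<forall>m\<ge>1. A ^\<^sub>m m \<in> V"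
    and k: "k \<ge> 1"
  shows "A ^\<^sub>m k * mat_poly n p A \<in> V"
  using k
proof (induction p arbitrary: k)
  case 0
  then show ?case
    using A V by (simp add: is_subspace_def)
next
  case (pCons c p)
  have Q: "mat_poly n p A \<in> carrier_mat n n" and Ak: "A ^\<^sub>m k \<in> carrier_mat n n"
    using A by auto
  have "A ^\<^sub>m k * mat_poly n (pCons c p) A = c \<cdot>\<^sub>m A ^\<^sub>m k + A ^\<^sub>m Suc k * mat_poly n p A"
    using A Q Ak by (simp add: mat_poly_pCons[OF A] mult_add_distrib_mat[OF Ak _ mult_carrier_mat[OF A Q]]
        mult_smult_distrib[OF Ak one_carrier_mat] right_mult_one_mat[OF Ak] assoc_mult_mat[OF Ak A Q])
  moreover have "c \<cdot>\<^sub>m A ^\<^sub>m k \<in> V"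
    using V powers pCons.prems by (simp add: is_subspace_def)
  moreover have "A ^\<^sub>m Suc k * mat_poly n p A \<in> V"
    using pCons.IH[of "Suc k"] by simp
  ultimately show ?case
    using V by (simp add: is_subspace_def)
qed

text \<open>If \<open>p(0) = 0\<close> then \<open>p = X\<^sup>K h\<close> with \<open>h(0) \<noteq> 0\<close>, and \<open>h = c + X h\<^sub>1\<close> is invertible modulo
  \<open>X\<^sup>K\<close> by a truncated geometric series.\<close>
lemma poly_root_0_bezout:
  fixes p :: "'a::field poly"
  assumes p: "p \<noteq> 0" "poly p 0 = 0"
  shows "\<exists>K h u v. K \<ge> 1 \<and> p = [:0, 1:] ^ K * h \<and> [:0, 1:] ^ K * u + h * v = 1"
proof -
  define K where "K = order 0 p"
  obtain h where h: "p = [:0, 1:] ^ K * h" "\<not> [:0, 1:] dvd h"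
    using order_decomp[OF p(1), of 0] unfolding K_def by auto
  have "K \<ge> 1"
    using p order_root[of p 0] unfolding K_def by auto
  obtain c h1 where h_eq: "h = pCons c h1"
    by (cases h) auto
  have "c \<noteq> 0"
    using h(2) dvd_iff_poly_eq_0[of 0 h] by (simp add: h_eq poly_0_coeff_0)
  define d where "d = [:1 / c:]"
  define y where "y = [:0, 1:] * h1"
  have cd: "[:c:] * d = 1"
    using \<open>c \<noteq> 0\<close> by (simp add: d_def one_pCons)
  have "h = [:c:] + y"
    by (simp add: h_eq y_def)
  define S where "S = (\<Sum>i<K. (- (d * y)) ^ i)"
  have "[:c:] * (d * S) = S"
    by (simp only: mult.assoc[symmetric] cd mult_1)
  have "h * (d * S) = [:c:] * (d * S) + y * (d * S)"
    by (simp only: \<open>h = [:c:] + y\<close> distrib_right)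
  also have "\<dots> = (1 - (- (d * y))) * S"
    by (simp only: \<open>[:c:] * (d * S) = S\<close>) (simp add: algebra_simps)
  also have "\<dots> = 1 - (- (d * y)) ^ K"
    unfolding S_def by (rule one_diff_power_eq[symmetric])
  finally have "1 = (- (d * y)) ^ K + h * (d * S)"
    by simp
  also have "(- (d * y)) ^ K = [:0, 1:] ^ K * (- (d * h1)) ^ K"
    by (simp add: y_def power_mult_distrib[symmetric] mult_ac)
  finally show ?thesis
    using \<open>K \<ge> 1\<close> h(1) by metis
qed

lemma nilpotent_if_powers_in_idempotent_free_subspace:
  fixes A :: "'a::field mat"
  assumes A: "A \<in> carrier_mat n n" and V: "is_subspace n V" and powers: "\<forall>m\<ge>1. A ^\<^sub>m m \<in> V"
    and idempotent_free: "\<And>E. E \<in> V \<Longrightarrow> E * E = E \<Longrightarrow> E = 0\<^sub>m n n"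
  shows "\<exists>K. A ^\<^sub>m K = 0\<^sub>m n n"
proof -
  obtain p where p: "p \<noteq> 0" "poly p 0 = 0" "mat_poly n p A = 0\<^sub>m n n"
    using annihilating_poly_exists[OF A] by blast
  obtain K h u v where K: "K \<ge> 1" and p_eq: "p = [:0, 1:] ^ K * h"
    and bezout: "[:0, 1:] ^ K * u + h * v = 1"
    using poly_root_0_bezout[OF p(1,2)] by blast
  \<comment> \<open>\<open>E\<close> is the Fitting idempotent of \<open>A\<close> onto its invertible part.\<close>
  define E where "E = mat_poly n ([:0, 1:] ^ K * u) A"
  define F where "F = mat_poly n (h * v) A"
  have E: "E \<in> carrier_mat n n" and F: "F \<in> carrier_mat n n" and AK: "A ^\<^sub>m K \<in> carrier_mat n n"
    using A by (auto simp: E_def F_def)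
  have kills: "mat_poly n (p * q) A = 0\<^sub>m n n" for q
    using A by (simp add: mat_poly_mult p(3) left_mult_zero_mat[OF mat_poly_carrier[OF A]])
  have EF: "E + F = 1\<^sub>m n"
    using A by (simp add: E_def F_def mat_poly_add[symmetric] bezout)
  have "E * F = mat_poly n (p * (u * v)) A"
    using A by (simp add: E_def F_def mat_poly_mult[symmetric] p_eq mult_ac)
  then have "E * E = E * (E + F)"
    using E F by (simp add: mult_add_distrib_mat[OF E E F] kills)
  then have "E * E = E"
    using E by (simp add: EF)
  moreover have "E \<in> V"
    using subspace_pow_mult_mat_poly[OF A V powers K, of u]
    by (simp add: E_def mat_poly_mult[OF A] mat_poly_X_power[OF A])
  ultimately have "E = 0\<^sub>m n n"
    by (rule idempotent_free[rotated])
  have "A ^\<^sub>m K = A ^\<^sub>m K * (E + F)"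
    using AK by (simp add: EF right_mult_one_mat[OF AK])
  also have "\<dots> = A ^\<^sub>m K * E + A ^\<^sub>m K * F"
    by (rule mult_add_distrib_mat[OF AK E F])
  also have "A ^\<^sub>m K * F = mat_poly n (p * v) A"
    by (simp add: F_def p_eq mult.assoc mat_poly_mult[OF A] mat_poly_X_power[OF A])
  also have "A ^\<^sub>m K * E + \<dots> = 0\<^sub>m n n"
    using AK by (simp add: \<open>E = 0\<^sub>m n n\<close> kills right_mult_zero_mat[OF AK])
  finally show ?thesis ..
qed

lemma mathieu_subspace_if_idempotent_free:
  fixes V :: "'a::field mat set"
  assumes V: "is_subspace n V"
    and idempotent_free: "\<And>E. E \<in> V \<Longrightarrow> E * E = E \<Longrightarrow> E = 0\<^sub>m n n"
  shows "mathieu_subspace n V"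
  unfolding mathieu_subspace_def
proof (intro conjI V ballI impI)
  fix A b c :: "'a mat"
  assume A: "A \<in> carrier_mat n n" and b: "b \<in> carrier_mat n n" and c: "c \<in> carrier_mat n n"
    and powers: "\<forall>m\<ge>1. A ^\<^sub>m m \<in> V"
  obtain K where K: "A ^\<^sub>m K = 0\<^sub>m n n"
    using nilpotent_if_powers_in_idempotent_free_subspace[OF A V powers idempotent_free] by blast
  have "A ^\<^sub>m m = 0\<^sub>m n n" if "m \<ge> K" for m
    using that
  proof (induction m rule: dec_induct)
    case (step m)
    then show ?case using A by simp
  qed (rule K)
  then have "b * A ^\<^sub>m m * c \<in> V" if "m \<ge> K" for m
    using that b c V by (simp add: is_subspace_def)
  then show "\<exists>N. \<forall>m\<ge>N. b * A ^\<^sub>m m * c \<in> V"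
    by blast
qed

section \<open>Graded idempotents\<close>

lemma sum_lessThan_if:
  fixes n :: nat
  shows "(\<Sum>m<n. if P m then f m else 0) = (\<Sum>m | m < n \<and> P m. f m)"
proof -
  have "sum f {m \<in> {..<n}. P m} = (\<Sum>m<n. if P m then f m else 0)"
    by (rule sum.inter_filter) simp
  moreover have "{m \<in> {..<n}. P m} = {m. m < n \<and> P m}"
    by auto
  ultimately show ?thesis
    by simp
qed

lemma sum_lower_grades_zero:
  fixes g :: "nat \<Rightarrow> 'b::linorder" and h w :: "nat \<Rightarrow> 'a::comm_ring_1"
  assumes w: "\<And>l l'. l < n \<Longrightarrow> l' < n \<Longrightarrow> g l = g l' \<Longrightarrow> w l = w l'"
    and h: "\<And>c'. c' < c \<Longrightarrow> (\<Sum>l | l < n \<and> g l = c'. h l) = 0"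
  shows "(\<Sum>l | l < n \<and> g l < c. w l * h l) = 0"
proof -
  let ?S = "{l. l < n \<and> g l < c}"
  have "(\<Sum>l\<in>?S. w l * h l) = (\<Sum>v\<in>g ` ?S. \<Sum>l | l \<in> ?S \<and> g l = v. w l * h l)"
    by (rule sum.image_gen) auto
  also have "\<dots> = 0"
  proof (rule sum.neutral, rule ballI)
    fix v assume "v \<in> g ` ?S"
    then obtain l0 where l0: "l0 < n" "g l0 < c" "v = g l0"
      by auto
    have fibre: "{l. l \<in> ?S \<and> g l = v} = {l. l < n \<and> g l = g l0}"
      using l0 by auto
    have "(\<Sum>l | l < n \<and> g l = g l0. w l * h l) = (\<Sum>l | l < n \<and> g l = g l0. w l0 * h l)"
    proof (rule sum.cong)
      fix l assume "l \<in> {l. l < n \<and> g l = g l0}"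
      then show "w l * h l = w l0 * h l"
        using w[of l l0] l0(1) by simp
    qed simp
    also have "\<dots> = 0"
      using h[OF l0(2)] by (simp add: sum_distrib_left[symmetric])
    finally show "(\<Sum>l | l \<in> ?S \<and> g l = v. w l * h l) = 0"
      by (simp only: fibre)
  qed
  finally show ?thesis .
qed

lemma sum_lessThan_split_grade:
  fixes n :: nat and g :: "nat \<Rightarrow> 'b::linorder"
  shows "(\<Sum>m<n. h m) = (\<Sum>m | m < n \<and> g m < c. h m) + (\<Sum>m | m < n \<and> g m = c. h m)
      + (\<Sum>m | m < n \<and> c < g m. h m)"
proof -
  have "{..<n} = ({m. m < n \<and> g m < c} \<union> {m. m < n \<and> g m = c}) \<union> {m. m < n \<and> c < g m}"
    by auto
  moreover have "sum h ({m. m < n \<and> g m < c} \<union> {m. m < n \<and> g m = c})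
      = sum h {m. m < n \<and> g m < c} + sum h {m. m < n \<and> g m = c}"
    by (rule sum.union_disjoint) auto
  moreover have "sum h (({m. m < n \<and> g m < c} \<union> {m. m < n \<and> g m = c}) \<union> {m. m < n \<and> c < g m})
      = sum h ({m. m < n \<and> g m < c} \<union> {m. m < n \<and> g m = c}) + sum h {m. m < n \<and> c < g m}"
    by (rule sum.union_disjoint) auto
  ultimately show ?thesis
    by simp
qed

definition block_diagonal :: "nat \<Rightarrow> (nat \<Rightarrow> 'b) \<Rightarrow> 'a::zero mat \<Rightarrow> bool" where
  "block_diagonal n g M \<longleftrightarrow> (\<forall>i<n. \<forall>j<n. g i \<noteq> g j \<longrightarrow> M $$ (i, j) = 0)"

lemma block_diagonal_mult:
  assumes M: "M \<in> carrier_mat n n" and N: "N \<in> carrier_mat n n"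
    and "block_diagonal n g M" "block_diagonal n g N"
  shows "block_diagonal n g (M * N)"
  unfolding block_diagonal_def
proof (intro allI impI)
  fix i j assume ij: "i < n" "j < n" "g i \<noteq> g j"
  have "M $$ (i, m) * N $$ (m, j) = 0" if "m < n" for m
    using assms ij that unfolding block_diagonal_def by (cases "g i = g m") auto
  then show "(M * N) $$ (i, j) = 0"
    using ij by (simp add: index_mult_mat_sum[OF M N] del: index_mult_mat)
qed

definition weighted_trace :: "(nat \<Rightarrow> 'a::comm_ring_1) \<Rightarrow> 'a mat \<Rightarrow> 'a" where
  "weighted_trace lam M = (\<Sum>i<dim_row M. lam i * M $$ (i, i))"

lemma weighted_trace_add:
  "A \<in> carrier_mat n n \<Longrightarrow> B \<in> carrier_mat n n \<Longrightarrow>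
    weighted_trace lam (A + B) = weighted_trace lam A + weighted_trace lam B"
  by (simp add: weighted_trace_def sum.distrib algebra_simps)

lemma weighted_trace_diff:
  "A \<in> carrier_mat n n \<Longrightarrow> B \<in> carrier_mat n n \<Longrightarrow>
    weighted_trace lam (A - B) = weighted_trace lam A - weighted_trace lam B"
  by (simp add: weighted_trace_def sum_subtractf algebra_simps)

lemma weighted_trace_smult:
  "A \<in> carrier_mat n n \<Longrightarrow> weighted_trace lam (c \<cdot>\<^sub>m A) = c * weighted_trace lam A"
  by (simp add: weighted_trace_def sum_distrib_left algebra_simps)

text \<open>Grading the coordinates by \<open>g\<close> splits \<open>e\<close> into blocks \<open>e\<^bsub>cd\<^esub>\<close>; the hypothesis says that
  \<open>e\<^bsub>c'c\<^esub> e\<^bsub>cc''\<^esub>\<close> vanishes whenever \<open>c\<close> lies strictly below both \<open>c'\<close> and \<open>c''\<close>.\<close>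
locale graded_idempotent =
  fixes n :: nat and g :: "nat \<Rightarrow> 'b::linorder" and e :: "'a::comm_ring_1 mat"
  assumes carrier: "e \<in> carrier_mat n n" and idempotent: "e * e = e"
    and lower_block_products: "\<And>c i j. i < n \<Longrightarrow> j < n \<Longrightarrow> c < g i \<Longrightarrow> c < g j \<Longrightarrow>
      (\<Sum>l | l < n \<and> g l = c. e $$ (i, l) * e $$ (l, j)) = 0"
begin

abbreviation through :: "'b \<Rightarrow> nat \<Rightarrow> nat \<Rightarrow> 'a" where
  "through c i j \<equiv> \<Sum>l | l < n \<and> g l = c. e $$ (i, l) * e $$ (l, j)"

lemma lower_grades_weighted_zero:
  assumes w: "\<And>l l'. l < n \<Longrightarrow> l' < n \<Longrightarrow> g l = g l' \<Longrightarrow> w l = w l'"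
    and ij: "i < n" "j < n" "c \<le> g i" "c \<le> g j"
  shows "(\<Sum>l | l < n \<and> g l < c. w l * (e $$ (i, l) * e $$ (l, j))) = 0"
  using w by (rule sum_lower_grades_zero) (use ij lower_block_products in auto)

lemma entry_split:
  assumes ij: "i < n" "j < n" "c \<le> g i" "c \<le> g j"
  shows "e $$ (i, j) = through c i j + (\<Sum>l | l < n \<and> c < g l. e $$ (i, l) * e $$ (l, j))"
proof -
  have "e $$ (i, j) = (\<Sum>l<n. e $$ (i, l) * e $$ (l, j))"
    using index_mult_mat_sum[OF carrier carrier ij(1,2)] by (simp add: idempotent)
  then show ?thesis
    using sum_lessThan_split_grade[of "\<lambda>l. e $$ (i, l) * e $$ (l, j)" n g c]
      lower_grades_weighted_zero[of "\<lambda>_. 1", OF _ ij] by simp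
qed

definition diag_part :: "'a mat" where
  "diag_part = mat n n (\<lambda>(i, j). if g i = g j then e $$ (i, j) else 0)"

definition defect :: "'a mat" where
  "defect = mat n n (\<lambda>(i, j). if g i = g j
     then - (\<Sum>k | k < n \<and> g i < g k. e $$ (i, k) * e $$ (k, j)) else 0)"

lemma diag_part_carrier [simp]: "diag_part \<in> carrier_mat n n"
  by (simp add: diag_part_def)

lemma defect_carrier [simp]: "defect \<in> carrier_mat n n"
  by (simp add: defect_def)

lemma block_diagonal_diag_part: "block_diagonal n g diag_part"
  by (simp add: diag_part_def block_diagonal_def)

lemma block_diagonal_defect: "block_diagonal n g defect"
  by (simp add: defect_def block_diagonal_def)

lemma index_diag_part_square:
  assumes ij: "i < n" "j < n"
  shows "(diag_part * diag_part) $$ (i, j) = (if g i = g j then through (g i) i j else 0)"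
proof -
  have "(diag_part * diag_part) $$ (i, j) = (\<Sum>m<n. diag_part $$ (i, m) * diag_part $$ (m, j))"
    by (rule index_mult_mat_sum[OF diag_part_carrier diag_part_carrier ij])
  also have "\<dots> = (\<Sum>m<n. if g m = g i \<and> g i = g j then e $$ (i, m) * e $$ (m, j) else 0)"
    using ij by (intro sum.cong) (auto simp: diag_part_def)
  finally show ?thesis
    by (simp add: sum_lessThan_if)
qed

lemma diag_part_square: "diag_part * diag_part = diag_part + defect"
proof (rule eq_matI)
  fix i j assume "i < dim_row (diag_part + defect)" "j < dim_col (diag_part + defect)"
  then have ij: "i < n" "j < n"
    by (auto simp: defect_def)
  show "(diag_part * diag_part) $$ (i, j) = (diag_part + defect) $$ (i, j)"
    unfolding index_diag_part_square[OF ij] using ij entry_split[of i j "g i"]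
    by (cases "g i = g j") (auto simp: diag_part_def defect_def)
qed (auto simp: diag_part_def defect_def)

lemma defect_square: "defect * defect = 0\<^sub>m n n"
proof (rule eq_matI)
  fix i j assume "i < dim_row (0\<^sub>m n n :: 'a mat)" "j < dim_col (0\<^sub>m n n :: 'a mat)"
  then have ij: "i < n" "j < n"
    by auto
  let ?K = "{k. k < n \<and> g i < g k}" and ?C = "{m. m < n \<and> g m = g i}"
  have "(defect * defect) $$ (i, j) = 0"
  proof (cases "g i = g j")
    case True
    have "(defect * defect) $$ (i, j) = (\<Sum>m<n. defect $$ (i, m) * defect $$ (m, j))"
      by (rule index_mult_mat_sum[OF defect_carrier defect_carrier ij])
    also have "\<dots> = (\<Sum>m<n. if g m = g i then
        (\<Sum>k\<in>?K. e $$ (i, k) * e $$ (k, m)) * (\<Sum>k'\<in>?K. e $$ (m, k') * e $$ (k', j)) else 0)"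
      using ij True by (intro sum.cong) (auto simp: defect_def)
    also have "\<dots> = (\<Sum>m\<in>?C. \<Sum>k\<in>?K. \<Sum>k'\<in>?K. (e $$ (i, k) * e $$ (k, m)) * (e $$ (m, k') * e $$ (k', j)))"
      by (simp add: sum_lessThan_if sum_product)
    also have "\<dots> = (\<Sum>k\<in>?K. \<Sum>m\<in>?C. \<Sum>k'\<in>?K. (e $$ (i, k) * e $$ (k, m)) * (e $$ (m, k') * e $$ (k', j)))"
      by (rule sum.swap)
    also have "\<dots> = (\<Sum>k\<in>?K. \<Sum>k'\<in>?K. \<Sum>m\<in>?C. (e $$ (i, k) * e $$ (k, m)) * (e $$ (m, k') * e $$ (k', j)))"
      by (intro sum.cong refl sum.swap)
    also have "\<dots> = (\<Sum>k\<in>?K. \<Sum>k'\<in>?K. e $$ (i, k) * through (g i) k k' * e $$ (k', j))"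
      by (simp add: sum_distrib_left sum_distrib_right mult_ac)
    also have "\<dots> = 0"
      using ij lower_block_products by (intro sum.neutral ballI) auto
    finally show ?thesis .
  next
    case False
    have "defect $$ (i, m) * defect $$ (m, j) = 0" if "m < n" for m
      using ij that False by (auto simp: defect_def)
    then show ?thesis
      by (simp add: index_mult_mat_sum[OF defect_carrier defect_carrier ij] del: index_mult_mat)
  qed
  then show "(defect * defect) $$ (i, j) = 0\<^sub>m n n $$ (i, j)"
    using ij by simp
qed (auto simp: defect_def)

lemma weighted_trace_defect:
  assumes lam: "\<And>l l'. l < n \<Longrightarrow> l' < n \<Longrightarrow> g l = g l' \<Longrightarrow> lam l = lam l'"
  shows "weighted_trace lam defect = 0"
proof -
  let ?F = "\<lambda>i k. if g i < g k then lam i * (e $$ (k, i) * e $$ (i, k)) else 0"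
  have "lam i * defect $$ (i, i) = - (\<Sum>k<n. ?F i k)" if "i < n" for i
    using that by (simp add: defect_def sum_lessThan_if sum_distrib_left mult_ac)
  then have "weighted_trace lam defect = - (\<Sum>i<n. \<Sum>k<n. ?F i k)"
    by (simp add: weighted_trace_def defect_def sum_negf)
  also have "(\<Sum>i<n. \<Sum>k<n. ?F i k) = (\<Sum>k<n. \<Sum>i | i < n \<and> g i < g k. lam i * (e $$ (k, i) * e $$ (i, k)))"
    by (subst sum.swap) (simp add: sum_lessThan_if)
  also have "\<dots> = 0"
    using lower_grades_weighted_zero[OF lam] by (intro sum.neutral) auto
  finally show ?thesis
    by simp
qed

lemma class_triple_products_zero:
  assumes k: "k < n" and c: "c < g k"
  shows "(\<Sum>i | i < n \<and> g i = c. \<Sum>m | m < n \<and> g m = c. e $$ (k, m) * e $$ (m, i) * e $$ (i, k)) = 0"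
proof -
  let ?C = "{l. l < n \<and> g l = c}" and ?A = "{l. l < n \<and> c < g l}"
  have "(\<Sum>i\<in>?C. \<Sum>m\<in>?C. e $$ (k, m) * e $$ (m, i) * e $$ (i, k))
      = (\<Sum>m\<in>?C. e $$ (k, m) * (\<Sum>i\<in>?C. e $$ (m, i) * e $$ (i, k)))"
    by (subst sum.swap) (simp add: sum_distrib_left mult_ac)
  also have "\<dots> = (\<Sum>m\<in>?C. e $$ (k, m) * (e $$ (m, k) - (\<Sum>i\<in>?A. e $$ (m, i) * e $$ (i, k))))"
    using entry_split[of _ k c] k c by (intro sum.cong) auto
  also have "\<dots> = through c k k - (\<Sum>m\<in>?C. \<Sum>i\<in>?A. e $$ (k, m) * (e $$ (m, i) * e $$ (i, k)))"
    by (simp add: right_diff_distrib sum_subtractf sum_distrib_left)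
  also have "(\<Sum>m\<in>?C. \<Sum>i\<in>?A. e $$ (k, m) * (e $$ (m, i) * e $$ (i, k)))
      = (\<Sum>i\<in>?A. through c k i * e $$ (i, k))"
    by (subst sum.swap) (simp add: sum_distrib_right mult.assoc)
  also have "through c k k = 0"
    by (rule lower_block_products[OF k k c c])
  also have "(\<Sum>i\<in>?A. through c k i * e $$ (i, k)) = 0"
    using lower_block_products[OF k _ c] by (intro sum.neutral) auto
  finally show ?thesis
    by simp
qed

lemma weighted_trace_defect_mult_diag_part:
  assumes lam: "\<And>l l'. l < n \<Longrightarrow> l' < n \<Longrightarrow> g l = g l' \<Longrightarrow> lam l = lam l'"
  shows "weighted_trace lam (defect * diag_part) = 0"
proof -
  let ?T = "\<lambda>k i. \<Sum>m | m < n \<and> g m = g i. e $$ (k, m) * e $$ (m, i) * e $$ (i, k)"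
  let ?F = "\<lambda>i k. if g i < g k then lam i * ?T k i else 0"
  have "lam i * (defect * diag_part) $$ (i, i) = - (\<Sum>k<n. ?F i k)" if i: "i < n" for i
  proof -
    let ?K = "{k. k < n \<and> g i < g k}" and ?C = "{m. m < n \<and> g m = g i}"
    have "(defect * diag_part) $$ (i, i) = (\<Sum>m<n. defect $$ (i, m) * diag_part $$ (m, i))"
      by (rule index_mult_mat_sum[OF defect_carrier diag_part_carrier i i])
    also have "\<dots> = (\<Sum>m<n. if g m = g i then - (\<Sum>k\<in>?K. e $$ (i, k) * e $$ (k, m)) * e $$ (m, i) else 0)"
      using i by (intro sum.cong) (auto simp: defect_def diag_part_def)
    also have "\<dots> = - (\<Sum>m\<in>?C. \<Sum>k\<in>?K. e $$ (i, k) * e $$ (k, m) * e $$ (m, i))"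
      by (simp add: sum_lessThan_if sum_negf sum_distrib_right)
    also have "\<dots> = - (\<Sum>k\<in>?K. ?T k i)"
      by (subst sum.swap) (simp add: mult_ac)
    finally show ?thesis
      by (simp add: sum_lessThan_if sum_distrib_left)
  qed
  then have "weighted_trace lam (defect * diag_part) = - (\<Sum>i<n. \<Sum>k<n. ?F i k)"
    by (simp add: weighted_trace_def defect_def sum_negf)
  also have "(\<Sum>i<n. \<Sum>k<n. ?F i k) = (\<Sum>k<n. \<Sum>i | i < n \<and> g i < g k. lam i * ?T k i)"
    by (subst sum.swap) (simp add: sum_lessThan_if)
  also have "\<dots> = 0"
  proof (rule sum.neutral, rule ballI)
    fix k assume "k \<in> {..<n}"
    then have k: "k < n" by simp
    have class_sums: "(\<Sum>i | i < n \<and> g i = c. ?T k i) = 0" if "c < g k" for c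
    proof -
      have "(\<Sum>i | i < n \<and> g i = c. ?T k i)
          = (\<Sum>i | i < n \<and> g i = c. \<Sum>m | m < n \<and> g m = c. e $$ (k, m) * e $$ (m, i) * e $$ (i, k))"
        by (rule sum.cong) auto
      also have "\<dots> = 0"
        by (rule class_triple_products_zero[OF k that])
      finally show ?thesis .
    qed
    show "(\<Sum>i | i < n \<and> g i < g k. lam i * ?T k i) = 0"
      by (rule sum_lower_grades_zero[OF lam class_sums])
  qed
  finally show ?thesis
    by simp
qed

lemma zero_from_grade_if_zero_above:
  assumes square_zero: "diag_part * diag_part = 0\<^sub>m n n"
    and above: "\<And>i j. i < n \<Longrightarrow> j < n \<Longrightarrow> c < g i \<Longrightarrow> c < g j \<Longrightarrow> e $$ (i, j) = 0"
    and ij: "i < n" "j < n" "c \<le> g i" "c \<le> g j"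
  shows "e $$ (i, j) = 0"
proof -
  let ?C = "{m. m < n \<and> g m = c}"
  have through_c: "through c l l' = 0" if "l < n" "l' < n" "g l = c" "g l' = c" for l l'
    using index_diag_part_square[of l l'] that by (simp add: square_zero)
  have col: "e $$ (l, j') = through c l j'" if "l < n" "g l = c" "j' < n" "c < g j'" for l j'
    using entry_split[of l j' c] above that by simp
  have row: "e $$ (i', l) = through c i' l" if "l < n" "g l = c" "i' < n" "c < g i'" for i' l
    using entry_split[of i' l c] above that by simp
  have left: "e $$ (i', j') = 0" if ij': "i' < n" "j' < n" "g i' = c" "c < g j'" for i' j'
  proof -
    have "e $$ (i', j') = (\<Sum>m\<in>?C. e $$ (i', m) * through c m j')"
      using col[OF ij'(1,3,2,4)] col[OF _ _ ij'(2,4)] by (auto intro: sum.cong)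
    also have "\<dots> = (\<Sum>m'\<in>?C. through c i' m' * e $$ (m', j'))"
      unfolding sum_distrib_left sum_distrib_right by (subst sum.swap) (simp add: mult_ac)
    also have "\<dots> = 0"
      using through_c ij' by (intro sum.neutral) auto
    finally show ?thesis .
  qed
  have right: "e $$ (i', j') = 0" if ij': "i' < n" "j' < n" "g j' = c" "c < g i'" for i' j'
  proof -
    have "e $$ (i', j') = (\<Sum>m\<in>?C. through c i' m * e $$ (m, j'))"
      using row[OF ij'(2,3,1,4)] row[OF _ _ ij'(1,4)] by (auto intro: sum.cong)
    also have "\<dots> = (\<Sum>m'\<in>?C. e $$ (i', m') * through c m' j')"
      unfolding sum_distrib_left sum_distrib_right by (subst sum.swap) (simp add: mult_ac)
    also have "\<dots> = 0"
      using through_c ij' by (intro sum.neutral) auto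
    finally show ?thesis .
  qed
  consider "c < g i" "c < g j" | "g i = c" "c < g j" | "g j = c" "c < g i" | "g i = c" "g j = c"
    using ij by fastforce
  then show ?thesis
  proof cases
    case 4
    have "(\<Sum>l | l < n \<and> c < g l. e $$ (i, l) * e $$ (l, j)) = 0"
      using left[of i] ij 4 by (intro sum.neutral) auto
    then show ?thesis
      using entry_split[OF ij] through_c[OF ij(1,2) 4] by simp
  qed (use above left right ij in auto)
qed

lemma eq_zero_if_diag_part_square_zero:
  assumes square_zero: "diag_part * diag_part = 0\<^sub>m n n"
  shows "e = 0\<^sub>m n n"
proof -
  have "\<forall>i j. i < n \<longrightarrow> j < n \<longrightarrow> c \<le> g i \<longrightarrow> c \<le> g j \<longrightarrow> e $$ (i, j) = 0" for c
  proof (induction "card {l. l < n \<and> c < g l}" arbitrary: c rule: less_induct)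
    case less
    have "e $$ (i, j) = 0" if ij: "i < n" "j < n" "c < g i" "c < g j" for i j
    proof -
      let ?c' = "min (g i) (g j)"
      have "c < ?c'"
        using ij by simp
      have "{l. l < n \<and> ?c' < g l} \<subset> {l. l < n \<and> c < g l}"
      proof
        show "{l. l < n \<and> ?c' < g l} \<subseteq> {l. l < n \<and> c < g l}"
          using less_trans[OF \<open>c < ?c'\<close>] by auto
        obtain w where "w < n" "g w = ?c'"
          using ij by (cases "g i \<le> g j") (auto simp: min_def)
        then show "{l. l < n \<and> ?c' < g l} \<noteq> {l. l < n \<and> c < g l}"
          using ij by (metis (mono_tags, lifting) less_irrefl mem_Collect_eq min_less_iff_conj)
      qed
      then have "card {l. l < n \<and> ?c' < g l} < card {l. l < n \<and> c < g l}"
        by (rule psubset_card_mono[rotated]) simp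
      then show ?thesis
        using less ij by simp
    qed
    then show ?case
      using zero_from_grade_if_zero_above[OF square_zero] by blast
  qed
  then have "e $$ (i, j) = 0" if "i < n" "j < n" for i j
    using that by (meson min.cobounded1 min.cobounded2)
  then show ?thesis
    using carrier by (intro eq_matI) auto
qed

lemma eq_zero:
  assumes lam: "\<And>l l'. l < n \<Longrightarrow> l' < n \<Longrightarrow> g l = g l' \<Longrightarrow> lam l = lam l'"
    and trace: "weighted_trace lam e = 0"
    and no_traceless_idempotent: "\<And>E. E \<in> carrier_mat n n \<Longrightarrow> block_diagonal n g E \<Longrightarrow> E * E = E \<Longrightarrow>
      weighted_trace lam E = 0 \<Longrightarrow> E = 0\<^sub>m n n"
  shows "e = 0\<^sub>m n n"
proof -
  define E where "E = diag_part + defect - 2 \<cdot>\<^sub>m (defect * diag_part)"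
  note lifting = idempotent_lifting[OF diag_part_carrier defect_carrier diag_part_square defect_square,
      folded E_def]
  have DX: "defect * diag_part \<in> carrier_mat n n"
    using mult_carrier_mat[OF defect_carrier diag_part_carrier] .
  have E: "E \<in> carrier_mat n n"
    using DX by (simp add: E_def minus_carrier_mat)
  have block: "block_diagonal n g E"
    using block_diagonal_diag_part block_diagonal_defect
      block_diagonal_mult[OF defect_carrier diag_part_carrier block_diagonal_defect block_diagonal_diag_part]
    by (auto simp: block_diagonal_def E_def carrier_matD[OF DX]
        carrier_matD[OF diag_part_carrier] carrier_matD[OF defect_carrier])
  have "weighted_trace lam diag_part = weighted_trace lam e"
    using carrier by (simp add: weighted_trace_def diag_part_def)
  moreover have "weighted_trace lam E = weighted_trace lam diag_part + weighted_trace lam defect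
      - 2 * weighted_trace lam (defect * diag_part)"
    using DX by (simp add: E_def weighted_trace_add[of _ n] weighted_trace_diff[of _ n]
        weighted_trace_smult[of _ n])
  ultimately have "weighted_trace lam E = 0"
    using trace by (simp add: weighted_trace_defect[OF lam] weighted_trace_defect_mult_diag_part[OF lam])
  then have "E = 0\<^sub>m n n"
    by (rule no_traceless_idempotent[OF E block lifting(1)])
  then show ?thesis
    by (rule eq_zero_if_diag_part_square_zero[OF lifting(2)])
qed

end

section \<open>Split tori\<close>

lemma minus_vec_left_cancel:
  fixes u v w :: "'a::ab_group_add vec"
  assumes "u \<in> carrier_vec r" "v \<in> carrier_vec r" "w \<in> carrier_vec r"
  shows "u - v = u - w \<longleftrightarrow> v = w"
  using assms by (auto simp: vec_eq_iff)

lemma minus_vec_eq_uminus_minus: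
  fixes u v w :: "'a::ab_group_add vec"
  assumes "u \<in> carrier_vec r" "v \<in> carrier_vec r" "w \<in> carrier_vec r"
  shows "v - u = - (u - w) \<longleftrightarrow> v = w"
  using assms by (auto simp: vec_eq_iff)

lemma minus_vec_eq_zero_iff:
  fixes u v :: "'a::ab_group_add vec"
  assumes "u \<in> carrier_vec r" "v \<in> carrier_vec r"
  shows "u - v = 0\<^sub>v r \<longleftrightarrow> u = v"
  using assms by (auto simp: vec_eq_iff)

definition grade :: "rat vec \<Rightarrow> (nat \<Rightarrow> int vec) \<Rightarrow> nat \<Rightarrow> rat" where
  "grade f a i = f \<bullet> map_vec rat_of_int (a i)"

lemma grade_diff:
  assumes "a i \<in> carrier_vec r" "a j \<in> carrier_vec r" "f \<in> carrier_vec r"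
  shows "f \<bullet> map_vec rat_of_int (a i - a j) = grade f a i - grade f a j"
proof -
  have "map_vec rat_of_int (a i - a j) = map_vec rat_of_int (a i) - map_vec rat_of_int (a j)"
    using assms by (intro eq_vecI) auto
  then show ?thesis
    using assms by (simp add: grade_def scalar_prod_minus_distrib[of f r])
qed

lemma grade_eq_iff:
  assumes a_dim: "\<forall>i<n. a i \<in> carrier_vec r" and f_dim: "f \<in> carrier_vec r"
    and f_nonzero: "\<forall>w\<in>weights n a. w \<noteq> 0\<^sub>v r \<longrightarrow> f \<bullet> map_vec rat_of_int w \<noteq> 0"
    and ij: "i < n" "j < n"
  shows "grade f a i = grade f a j \<longleftrightarrow> a i = a j"
proof
  assume "grade f a i = grade f a j"
  then have "f \<bullet> map_vec rat_of_int (a i - a j) = 0"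
    using grade_diff[of a i r j f] a_dim f_dim ij by simp
  moreover have "a i - a j \<in> weights n a"
    using ij by (auto simp: weights_def)
  ultimately have "a i - a j = 0\<^sub>v r"
    using f_nonzero by blast
  moreover have "a i \<in> carrier_vec r" "a j \<in> carrier_vec r"
    using a_dim ij by auto
  ultimately show "a i = a j"
    by (auto simp: vec_eq_iff)
qed (simp add: grade_def)

definition weight_component :: "nat \<Rightarrow> (nat \<Rightarrow> int vec) \<Rightarrow> int vec \<Rightarrow> 'a::zero mat \<Rightarrow> 'a mat" where
  "weight_component n a w X = mat n n (\<lambda>(i, j). if a i - a j = w then X $$ (i, j) else 0)"

lemma weight_component_carrier [simp]: "weight_component n a w X \<in> carrier_mat n n"
  by (simp add: weight_component_def)

lemma wproj_eq_conjugate: "wproj n P Pinv a w x = P * weight_component n a w (Pinv * x * P) * Pinv"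
  by (simp add: wproj_def weight_component_def)

lemma mat_trace_torus_elem:
  fixes P Pinv x :: "'a::field mat"
  assumes P: "P \<in> carrier_mat n n" and Pinv: "Pinv \<in> carrier_mat n n" and x: "x \<in> carrier_mat n n"
  shows "mat_trace (torus_elem n P Pinv a t * x) = weighted_trace (\<lambda>i. char_val (a i) t) (Pinv * x * P)"
proof -
  define D where "D = mat n n (\<lambda>(i, j). if i = j then char_val (a i) t else (0::'a))"
  have D: "D \<in> carrier_mat n n" and X: "Pinv * x * P \<in> carrier_mat n n"
    using P Pinv x by (auto simp: D_def)
  have "mat_trace (torus_elem n P Pinv a t * x) = mat_trace (P * (D * Pinv * x))"
    using P D Pinv x by (simp add: torus_elem_def D_def[symmetric] assoc_mult_mat[of _ n n _ n _ n])
  also have "\<dots> = mat_trace ((D * Pinv * x) * P)"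
    using D Pinv x by (intro mat_trace_mult_comm[OF P]) simp
  also have "(D * Pinv * x) * P = D * (Pinv * x * P)"
    using P D Pinv x by (simp add: assoc_mult_mat[of _ n n _ n _ n])
  also have "mat_trace (D * (Pinv * x * P)) = (\<Sum>i<n. (D * (Pinv * x * P)) $$ (i, i))"
    using D X by (simp add: mat_trace_def)
  also have "\<dots> = (\<Sum>i<n. \<Sum>m<n. D $$ (i, m) * (Pinv * x * P) $$ (m, i))"
    by (intro sum.cong refl index_mult_mat_sum[OF D X]) auto
  also have "\<dots> = (\<Sum>i<n. char_val (a i) t * (Pinv * x * P) $$ (i, i))"
    by (intro sum.cong refl) (simp add: D_def if_distrib[of "\<lambda>z. z * _"] cong: if_cong)
  finally show ?thesis
    using Pinv by (simp add: weighted_trace_def)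
qed

lemma graded_idempotent_untwisted:
  fixes P Pinv e :: "'a::field mat"
  assumes P: "P \<in> carrier_mat n n" and Pinv: "Pinv \<in> carrier_mat n n" and P_inv: "P * Pinv = 1\<^sub>m n"
    and a_dim: "\<forall>i<n. a i \<in> carrier_vec r" and f_dim: "f \<in> carrier_vec r"
    and f_nonzero: "\<forall>w\<in>weights n a. w \<noteq> 0\<^sub>v r \<longrightarrow> f \<bullet> map_vec rat_of_int w \<noteq> 0"
    and e: "e \<in> carrier_mat n n" and idem: "e * e = e"
    and products: "\<forall>w\<in>{w\<in>weights n a. f \<bullet> map_vec rat_of_int w > 0}.
      \<forall>w'\<in>{w\<in>weights n a. f \<bullet> map_vec rat_of_int w > 0}.
        wproj n P Pinv a w e * wproj n P Pinv a (- w') e = 0\<^sub>m n n"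
  shows "graded_idempotent n (grade f a) (Pinv * e * P)"
proof
  have Pinv_P: "Pinv * P = 1\<^sub>m n"
    by (rule mat_mult_left_right_inverse[OF P Pinv P_inv])
  let ?e = "Pinv * e * P" and ?g = "grade f a"
  show "?e \<in> carrier_mat n n"
    using P Pinv e by simp
  show "?e * ?e = ?e"
    using conjugate_mult[OF Pinv P P_inv e e] by (simp add: idem)
  fix c i j assume ij: "i < n" "j < n" "c < ?g i" "c < ?g j"
  show "(\<Sum>l | l < n \<and> ?g l = c. ?e $$ (i, l) * ?e $$ (l, j)) = 0"
  proof (cases "\<exists>l0<n. ?g l0 = c")
    case False
    then have "{l. l < n \<and> ?g l = c} = {}"
      by blast
    then show ?thesis
      by (simp only: sum.empty)
  next
    case True
    then obtain l0 where l0: "l0 < n" "?g l0 = c"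
      by blast
    let ?w = "a i - a l0" and ?w' = "a j - a l0"
    have "?w \<in> weights n a" "?w' \<in> weights n a"
      using ij l0 by (auto simp: weights_def)
    moreover have "f \<bullet> map_vec rat_of_int ?w > 0" "f \<bullet> map_vec rat_of_int ?w' > 0"
      using grade_diff[of a _ r l0 f] a_dim f_dim ij l0 by auto
    ultimately have "wproj n P Pinv a ?w e * wproj n P Pinv a (- ?w') e = 0\<^sub>m n n"
      using products by blast
    moreover define M where "M = weight_component n a ?w ?e * weight_component n a (- ?w') ?e"
    have M: "M \<in> carrier_mat n n"
      unfolding M_def by (rule mult_carrier_mat[OF weight_component_carrier weight_component_carrier])
    ultimately have "P * M * Pinv = 0\<^sub>m n n"
      by (simp add: M_def wproj_eq_conjugate conjugate_mult[OF P Pinv Pinv_P])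
    then have zero: "M = 0\<^sub>m n n"
      using conjugate_cancel[OF P Pinv Pinv_P M] P Pinv by simp
    have match: "a i - a l = ?w \<and> a l - a j = - ?w' \<longleftrightarrow> ?g l = c" if "l < n" for l
      using minus_vec_left_cancel[of "a i" r "a l" "a l0"] minus_vec_eq_uminus_minus[of "a j" r "a l" "a l0"]
        grade_eq_iff[OF a_dim f_dim f_nonzero that l0(1)] a_dim ij(1,2) l0 that by auto
    have "M $$ (i, j) = (\<Sum>l<n. if ?g l = c then ?e $$ (i, l) * ?e $$ (l, j) else 0)"
      unfolding M_def index_mult_mat_sum[OF weight_component_carrier weight_component_carrier ij(1,2)]
      using ij match by (intro sum.cong refl) (auto simp: weight_component_def)
    then show ?thesis
      using zero ij by (simp add: sum_lessThan_if)
  qed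
qed

lemma block_idempotent_eq_zero_if_traceless:
  fixes P Pinv E :: "'a::field mat"
  assumes P: "P \<in> carrier_mat n n" and Pinv: "Pinv \<in> carrier_mat n n" and P_inv: "P * Pinv = 1\<^sub>m n"
    and a_dim: "\<forall>i<n. a i \<in> carrier_vec r" and f_dim: "f \<in> carrier_vec r"
    and f_nonzero: "\<forall>w\<in>weights n a. w \<noteq> 0\<^sub>v r \<longrightarrow> f \<bullet> map_vec rat_of_int w \<noteq> 0"
    and Lam_idem: "\<forall>e\<in>wspace n P Pinv a (0\<^sub>v r). idempotent_mat e \<and> e \<noteq> 0\<^sub>m n n
      \<longrightarrow> mat_trace (torus_elem n P Pinv a t * e) \<noteq> 0"
    and E: "E \<in> carrier_mat n n" and block: "block_diagonal n (grade f a) E" and idem: "E * E = E"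
    and trace: "weighted_trace (\<lambda>i. char_val (a i) t) E = 0"
  shows "E = 0\<^sub>m n n"
proof -
  have Pinv_P: "Pinv * P = 1\<^sub>m n"
    by (rule mat_mult_left_right_inverse[OF P Pinv P_inv])
  define e0 where "e0 = P * E * Pinv"
  have e0: "e0 \<in> carrier_mat n n"
    using P Pinv E by (simp add: e0_def)
  have untwist: "Pinv * e0 * P = E"
    unfolding e0_def by (rule conjugate_cancel[OF P Pinv Pinv_P E])
  have "weight_component n a (0\<^sub>v r) E = E"
  proof (rule eq_matI)
    fix i j assume "i < dim_row E" "j < dim_col E"
    then have ij: "i < n" "j < n"
      using E by auto
    have "a i - a j = 0\<^sub>v r \<longleftrightarrow> grade f a i = grade f a j"
      using minus_vec_eq_zero_iff[of "a i" r "a j"] grade_eq_iff[OF a_dim f_dim f_nonzero ij] a_dim ij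
      by simp
    then show "weight_component n a (0\<^sub>v r) E $$ (i, j) = E $$ (i, j)"
      using block ij by (auto simp: weight_component_def block_diagonal_def)
  qed (use E in \<open>auto simp: weight_component_def\<close>)
  then have "wproj n P Pinv a (0\<^sub>v r) e0 = P * E * Pinv"
    by (simp only: wproj_eq_conjugate untwist)
  then have "e0 \<in> wspace n P Pinv a (0\<^sub>v r)"
    unfolding wspace_def e0_def[symmetric] using e0 by (rule image_eqI[OF sym])
  moreover have "idempotent_mat e0"
    using conjugate_mult[OF P Pinv Pinv_P E E] idem by (simp add: idempotent_mat_def e0_def)
  moreover have "mat_trace (torus_elem n P Pinv a t * e0) = 0"
    using mat_trace_torus_elem[OF P Pinv e0] trace by (simp add: untwist)
  ultimately have "e0 = 0\<^sub>m n n"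
    using Lam_idem by blast
  then show ?thesis
    using untwist P Pinv by simp
qed

theorem theorem2p1:
  fixes n r :: nat
    and P Pinv Lam :: "'a::field mat"
    and a :: "nat \<Rightarrow> int vec"
    and f :: "rat vec"
    and V :: "'a mat set"
  assumes n_pos: "n \<ge> 1"
    and P_car: "P \<in> carrier_mat n n" and Pinv_car: "Pinv \<in> carrier_mat n n"
    and P_inv: "P * Pinv = 1\<^sub>m n"
    and a_dim: "\<forall>i<n. a i \<in> carrier_vec r"
    and f_dim: "f \<in> carrier_vec r"
    and f_nonzero: "\<forall>w\<in>weights n a. w \<noteq> 0\<^sub>v r \<longrightarrow> f \<bullet> map_vec rat_of_int w \<noteq> 0"
    and Lam_T: "Lam \<in> torus n r P Pinv a"
    and Lam_idem: "\<forall>e\<in>wspace n P Pinv a (0\<^sub>v r). idempotent_mat e \<and> e \<noteq> 0\<^sub>m n n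
                     \<longrightarrow> mat_trace (Lam * e) \<noteq> 0"
    and V_sub: "is_subspace n V"
    and V_perp: "V \<subseteq> perp_trace n Lam"
    and piV_perp: "wproj n P Pinv a (0\<^sub>v r) ` V \<subseteq> perp_trace n Lam"
    and V_prod: "\<forall>w\<in>{w\<in>weights n a. f \<bullet> map_vec rat_of_int w > 0}.
                 \<forall>w'\<in>{w\<in>weights n a. f \<bullet> map_vec rat_of_int w > 0}.
                 \<forall>x\<in>V. \<forall>y\<in>V.
                   wproj n P Pinv a w x * wproj n P Pinv a (- w') y = 0\<^sub>m n n"
  shows "mathieu_subspace n V"
proof -
  obtain t where Lam: "Lam = torus_elem n P Pinv a t"
    using Lam_T unfolding torus_def by auto
  define lam where "lam = (\<lambda>i. char_val (a i) t)"
  have "e = 0\<^sub>m n n" if e: "e \<in> V" "e * e = e" for e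
  proof -
    have e_car: "e \<in> carrier_mat n n"
      using e(1) V_sub by (auto simp: is_subspace_def)
    interpret graded_idempotent n "grade f a" "Pinv * e * P"
      using V_prod e(1)
      by (intro graded_idempotent_untwisted[OF P_car Pinv_car P_inv a_dim f_dim f_nonzero e_car e(2)]) blast
    have "Pinv * e * P = 0\<^sub>m n n"
    proof (rule eq_zero)
      show "lam l = lam l'" if "l < n" "l' < n" "grade f a l = grade f a l'" for l l'
        using grade_eq_iff[OF a_dim f_dim f_nonzero that(1,2)] that(3) by (simp add: lam_def)
      show "weighted_trace lam (Pinv * e * P) = 0"
        using V_perp e(1) mat_trace_torus_elem[OF P_car Pinv_car e_car]
        by (auto simp: Lam lam_def perp_trace_def)
      show "E = 0\<^sub>m n n" if "E \<in> carrier_mat n n" "block_diagonal n (grade f a) E" "E * E = E"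
        "weighted_trace lam E = 0" for E
        by (rule block_idempotent_eq_zero_if_traceless[OF P_car Pinv_car P_inv a_dim f_dim f_nonzero
              Lam_idem[unfolded Lam] that(1-3) that(4)[unfolded lam_def]])
    qed
    then show ?thesis
      using conjugate_cancel[OF Pinv_car P_car P_inv e_car] P_car Pinv_car by simp
  qed
  then show ?thesis
    by (rule mathieu_subspace_if_idempotent_free[OF V_sub])
qed

end
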